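(* For all $N\in\mathbb{N}$, $|\mathcal{D}_6(N)|=\frac18\,\#\{(x,y)\in\mathbb{Z}^2\mid x^2+y^2=12N+5\}$.
   Context: A bar partition is an integer partition $\lambda=(\lambda_1>\lambda_2>\dots>\lambda_r>0)$ with distinct parts; its size is $\sum\lambda_k$. Its double distinct partition $\widetilde\lambda$ is the partition with Frobenius coordinates $(\lambda_1,\dots,\lambda_r\mid\lambda_1-1,\dots,\lambda_r-1)$ (obtained by shifting row $k$ of the Young diagram of $\lambda$ by $k$ steps to the right and completing by the transpose of this shifted diagram). A partition is a $6$-core if none of its hook lengths equals $6$. $\mathcal{D}_6(N)$ is the set of bar partitions $\lambda$ of size $N$ with no part equal to $3$ such that $\widetilde\lambda$ is a $6$-core. *)

theory Defs
  imports Complex_Main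
begin

(* A partition is represented by its Young diagram: a set of cells (row, column),
   0-indexed, in English convention. *)

definition bar_partition :: "nat list \<Rightarrow> bool" where
  "bar_partition l \<longleftrightarrow> sorted_wrt (>) l \<and> (\<forall>x\<in>set l. x > 0)"

(* Young diagram of the partition with Frobenius coordinates
   (a_0,...,a_{r-1} | b_0,...,b_{r-1}) (0-indexed rows/columns):
   row k contains the diagonal cell (k,k) and a_k cells to its right,
   column k contains b_k cells below the diagonal cell (k,k). *)
definition frobenius_diagram :: "nat list \<Rightarrow> nat list \<Rightarrow> (nat \<times> nat) set" where
  "frobenius_diagram a b =
     (\<Union>k<length a. {(k, j) | j. k \<le> j \<and> j \<le> k + a ! k}
                  \<union> {(i, k) | i. k < i \<and> i \<le> k + b ! k})"

definition double_distinct :: "nat list \<Rightarrow> (nat \<times> nat) set" where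
  "double_distinct l = frobenius_diagram l (map (\<lambda>x. x - 1) l)"

definition hook_length :: "(nat \<times> nat) set \<Rightarrow> nat \<times> nat \<Rightarrow> nat" where
  "hook_length D c =
     card {j'. j' > snd c \<and> (fst c, j') \<in> D} + card {i'. i' > fst c \<and> (i', snd c) \<in> D} + 1"

definition is_core :: "nat \<Rightarrow> (nat \<times> nat) set \<Rightarrow> bool" where
  "is_core t D \<longleftrightarrow> (\<forall>c\<in>D. hook_length D c \<noteq> t)"

definition D6 :: "nat \<Rightarrow> nat list set" where
  "D6 N = {l. bar_partition l \<and> sum_list l = N \<and> 3 \<notin> set l \<and> is_core 6 (double_distinct l)}"

end

theory Submission
  imports Defs
begin

text \<open>
  Let \<open>S\<close> be the set of parts of a bar partition \<open>\<lambda>\<close>. The hook lengths of the double distinct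
  partition are the sums \<open>\<lambda>\<^sub>i + \<lambda>\<^sub>j\<close> of two parts (cells in the square \<open>r \<times> r\<close>) and the differences
  \<open>\<lambda>\<^sub>i - m\<close> with \<open>m < \<lambda>\<^sub>i\<close> not a part (cells outside it). Hence it is a \<open>t\<close>-core iff \<open>S\<close> is closed
  under subtracting \<open>t\<close> and no two parts add up to \<open>t\<close>. For \<open>t = 6\<close> such an \<open>S\<close> is an initial
  segment of the residue class 1 or 5 together with one of the class 2 or 4 (mod 6); recording
  their signed lengths \<open>a\<close>, \<open>b\<close> gives a bijection with \<open>\<int>\<^sup>2\<close> under which \<open>\<Sum>S = 3a\<^sup>2 - 2a + 3b\<^sup>2 - b\<close>.
  Finally \<open>(x, y) = (6a - 2, 6b - 1)\<close> satisfies \<open>x\<^sup>2 + y\<^sup>2 = 12 \<Sum>S + 5\<close>, and these are exactly the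
  solutions with \<open>x \<equiv> 4\<close>, \<open>y \<equiv> 5 (mod 6)\<close>; swapping and sign changes show that they form one
  eighth of all solutions.
\<close>

lemma finite_down_closed_eq_lessThan:
  fixes K :: "nat set"
  assumes fin: "finite K" and down: "\<And>x y. x \<in> K \<Longrightarrow> y \<le> x \<Longrightarrow> y \<in> K"
  shows "K = {..<card K}"
proof
  show "K \<subseteq> {..<card K}"
  proof
    fix x assume "x \<in> K"
    then have "{..x} \<subseteq> K" using down by auto
    then have "card {..x} \<le> card K" by (rule card_mono[OF fin])
    then show "x \<in> {..<card K}" by simp
  qed
  show "{..<card K} \<subseteq> K"
  proof
    fix n assume n: "n \<in> {..<card K}"
    show "n \<in> K"
    proof (rule ccontr)
      assume "n \<notin> K"
      then have "K \<subseteq> {..<n}" using down by (meson lessThan_iff not_le subsetI)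
      then have "card K \<le> n" by (metis card_lessThan card_mono finite_lessThan)
      then show False using n by simp
    qed
  qed
qed

definition minus_closed :: "nat \<Rightarrow> nat set \<Rightarrow> bool" where
  "minus_closed t A \<longleftrightarrow> (\<forall>a\<in>A. t \<le> a \<longrightarrow> a - t \<in> A)"

definition no_pair_sum :: "nat \<Rightarrow> nat set \<Rightarrow> bool" where
  "no_pair_sum t A \<longleftrightarrow> (\<forall>a\<in>A. \<forall>b\<in>A. a + b \<noteq> t)"

locale bar_diagram =
  fixes l :: "nat list"
  assumes bar: "bar_partition l"
begin

abbreviation r :: nat where "r \<equiv> length l"

definition row_end :: "nat \<Rightarrow> nat" where
  "row_end k = k + l ! k"

text \<open>For \<open>j \<ge> r\<close> this is the length of column \<open>j\<close> of the diagram.\<close>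
definition rows_reaching :: "nat \<Rightarrow> nat" where
  "rows_reaching j = card {k. k < r \<and> j \<le> row_end k}"

abbreviation D :: "(nat \<times> nat) set" where
  "D \<equiv> double_distinct l"

lemma part_pos: "k < r \<Longrightarrow> 0 < l ! k"
  using bar unfolding bar_partition_def by simp

lemma part_gap: "k \<le> k' \<Longrightarrow> k' < r \<Longrightarrow> l ! k' + (k' - k) \<le> l ! k"
proof (induction k')
  case (Suc k')
  show ?case
  proof (cases "k = Suc k'")
    case False
    then have "l ! k' + (k' - k) \<le> l ! k" using Suc by simp
    moreover have "l ! Suc k' < l ! k'"
      using bar Suc.prems sorted_wrt_nth_less[of "(>)" l k' "Suc k'"]
      unfolding bar_partition_def by simp
    ultimately show ?thesis using False Suc.prems by simp
  qed simp
qed simp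

lemma length_minus_le_part:
  assumes "k < r"
  shows "r - k \<le> l ! k"
proof -
  have "l ! (r - 1) + (r - 1 - k) \<le> l ! k" using part_gap[of k "r - 1"] assms by simp
  moreover have "0 < l ! (r - 1)" using part_pos[of "r - 1"] assms by simp
  ultimately show ?thesis by linarith
qed

lemma row_end_antimono: "k \<le> k' \<Longrightarrow> k' < r \<Longrightarrow> row_end k' \<le> row_end k"
  using part_gap[of k k'] unfolding row_end_def by simp

lemma mem_diagram_iff:
  "(i, j) \<in> D \<longleftrightarrow> (i < r \<and> i \<le> j \<and> j \<le> row_end i) \<or> (j < r \<and> j < i \<and> i < row_end j)"
proof -
  have "(i, j) \<in> D \<longleftrightarrow>
      (\<exists>k<r. (i = k \<and> k \<le> j \<and> j \<le> k + l ! k) \<or> (j = k \<and> k < i \<and> i \<le> k + (l ! k - 1)))"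
    unfolding double_distinct_def frobenius_diagram_def by auto
  also have "\<dots> \<longleftrightarrow> (i < r \<and> i \<le> j \<and> j \<le> row_end i) \<or> (j < r \<and> j < i \<and> i < row_end j)"
    unfolding row_end_def using part_pos by fastforce
  finally show ?thesis .
qed

lemma mem_diagram_row: "i < r \<Longrightarrow> (i, j) \<in> D \<longleftrightarrow> j \<le> row_end i"
  using mem_diagram_iff part_gap[of j i] part_pos[of i] unfolding row_end_def
  by (cases "j < i") auto

lemma mem_diagram_col: "j < r \<Longrightarrow> (i, j) \<in> D \<longleftrightarrow> i < row_end j"
  using mem_diagram_iff part_gap[of i j] part_pos[of j] unfolding row_end_def
  by (cases "i \<le> j") auto

lemma mem_diagram_below: "r \<le> i \<Longrightarrow> (i, j) \<in> D \<longleftrightarrow> j < r \<and> i < row_end j"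
  using mem_diagram_iff by auto

lemma mem_diagram_right: "r \<le> j \<Longrightarrow> (i, j) \<in> D \<longleftrightarrow> i < r \<and> j \<le> row_end i"
  using mem_diagram_iff by auto

lemma rows_reaching_eq: "{k. k < r \<and> j \<le> row_end k} = {..<rows_reaching j}"
  unfolding rows_reaching_def
  by (rule finite_down_closed_eq_lessThan) (auto intro: order_trans[OF _ row_end_antimono])

lemma rows_reaching_le: "rows_reaching j \<le> r"
  unfolding rows_reaching_def by (rule order_trans[OF card_mono[of "{..<r}"]]) auto

lemma square_le_row_end:
  assumes "i < r" "j < r"
  shows "j \<le> row_end i" "i < row_end j"
  using assms part_gap[of i j] part_gap[of j i] part_pos[of i] part_pos[of j]
  unfolding row_end_def by (cases "j \<le> i"; simp)+

lemma hook_length_square: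
  assumes "i < r" "j < r"
  shows "hook_length D (i, j) = l ! i + l ! j"
proof -
  have "{j'. j < j' \<and> (i, j') \<in> D} = {j<..row_end i}"
    by (simp add: mem_diagram_row[OF assms(1)] set_eq_iff)
  moreover have "{i'. i < i' \<and> (i', j) \<in> D} = {i<..<row_end j}"
    by (simp add: mem_diagram_col[OF assms(2)] set_eq_iff)
  ultimately show ?thesis
    unfolding hook_length_def using square_le_row_end[OF assms] by (simp add: row_end_def)
qed

lemma hook_length_right:
  assumes "i < r" "r \<le> j" "j \<le> row_end i"
  shows "hook_length D (i, j) + j = l ! i + rows_reaching j"
proof -
  have arm: "{j'. j < j' \<and> (i, j') \<in> D} = {j<..row_end i}"
    by (simp add: mem_diagram_row[OF assms(1)] set_eq_iff)
  have "{i'. i < i' \<and> (i', j) \<in> D} = {i'. i < i' \<and> i' \<in> {k. k < r \<and> j \<le> row_end k}}"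
    by (simp add: mem_diagram_right[OF assms(2)] set_eq_iff)
  also have "\<dots> = {i<..<rows_reaching j}"
    unfolding rows_reaching_eq by (simp add: set_eq_iff)
  finally have leg: "{i'. i < i' \<and> (i', j) \<in> D} = {i<..<rows_reaching j}" .
  have "i \<in> {k. k < r \<and> j \<le> row_end k}" using assms by simp
  then have "i < rows_reaching j" unfolding rows_reaching_eq by simp
  then show ?thesis
    using assms(3) by (simp add: hook_length_def arm leg row_end_def)
qed

lemma hook_length_below:
  assumes "r \<le> i" "j < r" "i < row_end j"
  shows "hook_length D (i, j) + Suc i = l ! j + rows_reaching (Suc i)"
proof -
  have "{j'. j < j' \<and> (i, j') \<in> D} = {j'. j < j' \<and> j' \<in> {k. k < r \<and> Suc i \<le> row_end k}}"
    by (simp add: mem_diagram_below[OF assms(1)] set_eq_iff Suc_le_eq)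
  also have "\<dots> = {j<..<rows_reaching (Suc i)}"
    unfolding rows_reaching_eq by (simp add: set_eq_iff)
  finally have arm: "{j'. j < j' \<and> (i, j') \<in> D} = {j<..<rows_reaching (Suc i)}" .
  have leg: "{i'. i < i' \<and> (i', j) \<in> D} = {i<..<row_end j}"
    by (simp add: mem_diagram_col[OF assms(2)] set_eq_iff)
  have "j \<in> {k. k < r \<and> Suc i \<le> row_end k}" using assms by simp
  then have "j < rows_reaching (Suc i)" unfolding rows_reaching_eq by simp
  then show ?thesis
    using assms(3) by (simp add: hook_length_def arm leg row_end_def)
qed

lemma column_offset_not_part:
  assumes "r \<le> j"
  shows "j - rows_reaching j \<notin> set l"
proof
  assume "j - rows_reaching j \<in> set l"
  then obtain k where k: "k < r" "l ! k = j - rows_reaching j" by (auto simp: in_set_conv_nth)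
  have "rows_reaching j \<le> j" using rows_reaching_le assms by (rule order_trans)
  moreover have "k < rows_reaching j \<longleftrightarrow> j \<le> k + l ! k"
    using rows_reaching_eq[of j] k(1) unfolding row_end_def by auto
  ultimately show False using k by linarith
qed

definition parts_above :: "nat \<Rightarrow> nat" where
  "parts_above m = card {k. k < r \<and> m < l ! k}"

lemma parts_above_eq: "{k. k < r \<and> m < l ! k} = {..<parts_above m}"
  unfolding parts_above_def
  by (rule finite_down_closed_eq_lessThan) (auto dest: part_gap)

lemma parts_above_le: "parts_above m \<le> r"
  unfolding parts_above_def by (rule order_trans[OF card_mono[of "{..<r}"]]) auto

lemma non_part_column_offset:
  assumes m: "m \<notin> set l" and i: "i < r" and mi: "m < l ! i"
  obtains j where "r \<le> j" "j \<le> row_end i" "rows_reaching j + m = j"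
proof -
  \<comment> \<open>the required column is \<open>j = m + s\<close>\<close>
  define s where "s = parts_above m"
  have sr: "s \<le> r" unfolding s_def by (rule parts_above_le)
  have above: "m < l ! k \<longleftrightarrow> k < s" if "k < r" for k
    using parts_above_eq[of m] that unfolding s_def by auto
  have below: "l ! k < m" if "k < r" "s \<le> k" for k
    using above[OF that(1)] m that nth_mem[of k l] by (cases "l ! k = m") auto
  have reach: "m + s \<le> row_end k \<longleftrightarrow> k < s" if "k < r" for k
  proof
    assume ks: "k < s"
    then have "m < l ! (s - 1)" using above[of "s - 1"] sr by simp
    moreover have "l ! (s - 1) + (s - 1 - k) \<le> l ! k" using part_gap[of k "s - 1"] ks sr by simp
    ultimately show "m + s \<le> row_end k" using ks unfolding row_end_def by linarith
  next
    assume reaches: "m + s \<le> row_end k"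
    show "k < s"
    proof (rule ccontr)
      assume "\<not> k < s"
      then have "l ! s < m" "l ! k + (k - s) \<le> l ! s"
        using below[of s] part_gap[of s k] that by simp_all
      then show False using reaches \<open>\<not> k < s\<close> unfolding row_end_def by linarith
    qed
  qed
  have "{k. k < r \<and> m + s \<le> row_end k} = {..<s}"
    using reach sr by auto
  then have "rows_reaching (m + s) = s"
    unfolding rows_reaching_def by simp
  moreover have "r \<le> m + s"
    using below[of s] length_minus_le_part[of s] sr by (cases "s < r") auto
  moreover have "m + s \<le> row_end i"
    using reach[OF i] above[OF i] mi by simp
  ultimately show ?thesis using that by simp
qed

lemma no_pair_sum_if_core:
  assumes "is_core t D"
  shows "no_pair_sum t (set l)"
  unfolding no_pair_sum_def
proof (intro ballI)
  fix a b assume "a \<in> set l" "b \<in> set l"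
  then obtain i j where ij: "i < r" "l ! i = a" "j < r" "l ! j = b"
    by (auto simp: in_set_conv_nth)
  then have "(i, j) \<in> D" using mem_diagram_row square_le_row_end by simp
  then show "a + b \<noteq> t"
    using assms hook_length_square ij unfolding is_core_def by fastforce
qed

lemma minus_closed_if_core:
  assumes core: "is_core t D"
  shows "minus_closed t (set l)"
  unfolding minus_closed_def
proof (intro ballI impI)
  fix a assume a: "a \<in> set l" "t \<le> a"
  show "a - t \<in> set l"
  proof (rule ccontr)
    assume gap: "a - t \<notin> set l"
    then have "0 < t" using a(1) by (cases t) auto
    obtain i where i: "i < r" "l ! i = a" using a(1) by (auto simp: in_set_conv_nth)
    then have "a - t < l ! i" using \<open>0 < t\<close> a(2) part_pos by simp
    then obtain j where j: "r \<le> j" "j \<le> row_end i" "rows_reaching j + (a - t) = j"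
      using non_part_column_offset[OF gap i(1)] by blast
    then have "(i, j) \<in> D" using mem_diagram_right i by simp
    moreover have "hook_length D (i, j) = t"
      using hook_length_right[OF i(1) j(1,2)] i(2) j(3) a(2) by simp
    ultimately show False using core unfolding is_core_def by blast
  qed
qed

lemma core_if_minus_closed_no_pair_sum:
  assumes closed: "minus_closed t (set l)" and no_sum: "no_pair_sum t (set l)"
  shows "is_core t D"
proof -
  have off: "hook_length D c \<noteq> t"
    if "hook_length D c + j = l ! k + rows_reaching j" "r \<le> j" "k < r" for c j k
  proof
    assume "hook_length D c = t"
    moreover have "rows_reaching j \<le> j" using rows_reaching_le that(2) by (rule order_trans)
    ultimately have "t \<le> l ! k" "l ! k - t = j - rows_reaching j" using that(1) by simp_all
    then show False
      using closed column_offset_not_part[OF that(2)] that(3) unfolding minus_closed_def by auto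
  qed
  show ?thesis
    unfolding is_core_def
  proof
    fix c assume c: "c \<in> D"
    obtain i j where ij: "c = (i, j)" by force
    consider "i < r" "j < r" | "i < r" "r \<le> j" | "r \<le> i" by linarith
    then show "hook_length D c \<noteq> t"
    proof cases
      case 1
      then show ?thesis using no_sum ij hook_length_square unfolding no_pair_sum_def by auto
    next
      case 2
      then show ?thesis using c ij hook_length_right[of i j] mem_diagram_right off by simp
    next
      case 3
      then show ?thesis
        using c ij hook_length_below[of i j] mem_diagram_below off[of _ "Suc i" j] by simp
    qed
  qed
qed

lemma is_core_iff: "is_core t D \<longleftrightarrow> minus_closed t (set l) \<and> no_pair_sum t (set l)"
  using no_pair_sum_if_core minus_closed_if_core core_if_minus_closed_no_pair_sum by blast

end

lemma is_core_double_distinct_iff: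
  assumes "bar_partition l"
  shows "is_core t (double_distinct l) \<longleftrightarrow> minus_closed t (set l) \<and> no_pair_sum t (set l)"
  using bar_diagram.is_core_iff[OF bar_diagram.intro[OF assms]] .

lemma bar_partition_eq_if_set_eq:
  assumes "bar_partition l" "bar_partition l'" "set l = set l'"
  shows "l = l'"
proof -
  have "sorted_wrt (<) (rev l)" "sorted_wrt (<) (rev l')"
    using assms(1,2) unfolding bar_partition_def sorted_wrt_rev by simp_all
  then have "rev l' = rev l" using strict_sorted_equal assms(3) by (metis set_rev)
  then show ?thesis by simp
qed

lemma bar_partition_of_set:
  assumes "finite A" "0 \<notin> A"
  shows "bar_partition (rev (sorted_list_of_set A))" "set (rev (sorted_list_of_set A)) = A"
proof -
  show set_eq: "set (rev (sorted_list_of_set A)) = A" using assms(1) by simp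
  have "sorted_wrt (<) (sorted_list_of_set A)" by (rule strict_sorted_list_of_set)
  then show "bar_partition (rev (sorted_list_of_set A))"
    unfolding bar_partition_def sorted_wrt_rev set_eq using assms(2) by (metis gr0I)
qed

definition bar_core_part_sets :: "nat \<Rightarrow> nat set set" where
  "bar_core_part_sets N = {A. finite A \<and> 0 \<notin> A \<and> minus_closed 6 A \<and> no_pair_sum 6 A \<and> \<Sum>A = N}"

lemma card_D6_eq_card_bar_core_part_sets: "card (D6 N) = card (bar_core_part_sets N)"
proof -
  have "inj_on set (D6 N)"
    unfolding D6_def by (rule inj_onI) (auto intro: bar_partition_eq_if_set_eq)
  moreover have "set ` D6 N = bar_core_part_sets N"
  proof (intro equalityI subsetI)
    fix A assume "A \<in> set ` D6 N"
    then obtain l where l: "l \<in> D6 N" "A = set l" by blast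
    then have bar: "bar_partition l" unfolding D6_def by simp
    then have "distinct l"
      unfolding bar_partition_def by (metis distinct_rev sorted_wrt_rev strict_sorted_iff)
    then have "\<Sum>A = N" using l unfolding D6_def by (simp add: distinct_sum_list_conv_Sum)
    moreover have "0 \<notin> A" using bar l(2) unfolding bar_partition_def by auto
    ultimately show "A \<in> bar_core_part_sets N"
      using l is_core_double_distinct_iff[OF bar] unfolding D6_def bar_core_part_sets_def by simp
  next
    fix A assume "A \<in> bar_core_part_sets N"
    then have A: "finite A" "0 \<notin> A" "minus_closed 6 A" "no_pair_sum 6 A" "\<Sum>A = N"
      unfolding bar_core_part_sets_def by simp_all
    define l where "l = rev (sorted_list_of_set A)"
    have bar: "bar_partition l" and set_l: "set l = A"
      using bar_partition_of_set[of A] A unfolding l_def by simp_all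
    have "distinct l" unfolding l_def by simp
    then have "sum_list l = N" using A set_l by (simp add: distinct_sum_list_conv_Sum)
    moreover have "3 \<notin> A" using A unfolding no_pair_sum_def by force
    ultimately have "l \<in> D6 N"
      using A bar set_l is_core_double_distinct_iff[OF bar] unfolding D6_def by simp
    then show "A \<in> set ` D6 N" using set_l by blast
  qed
  ultimately show ?thesis using card_image by fastforce
qed

definition progression :: "nat \<Rightarrow> nat \<Rightarrow> nat \<Rightarrow> nat set" where
  "progression t \<rho> n = (\<lambda>k. t * k + \<rho>) ` {..<n}"

lemma mod_progression: "\<rho> < t \<Longrightarrow> x \<in> progression t \<rho> n \<Longrightarrow> x mod t = \<rho>"
  unfolding progression_def by auto

lemma inj_on_progression: "0 < t \<Longrightarrow> inj_on (\<lambda>k. t * k + \<rho>) (A :: nat set)"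
  unfolding inj_on_def by simp

lemma card_progression: "0 < t \<Longrightarrow> card (progression t \<rho> n) = n"
  unfolding progression_def by (simp add: card_image inj_on_progression)

lemma sum_progression:
  assumes "0 < t"
  shows "2 * int (\<Sum>(progression t \<rho> n)) = int t * (int n ^ 2 - int n) + 2 * int \<rho> * int n"
proof -
  have "2 * int (\<Sum>k<n. t * k + \<rho>) = int t * (int n ^ 2 - int n) + 2 * int \<rho> * int n"
    by (induction n) (simp_all add: algebra_simps power2_eq_square)
  then show ?thesis
    unfolding progression_def using assms by (simp add: sum.reindex inj_on_progression)
qed

lemma minus_closed_progression:
  assumes "\<rho> < t"
  shows "minus_closed t (progression t \<rho> n)"
  unfolding minus_closed_def
proof (intro ballI impI)
  fix x assume "x \<in> progression t \<rho> n" "t \<le> x"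
  then obtain k where k: "k < n" "x = t * k + \<rho>" unfolding progression_def by auto
  with \<open>t \<le> x\<close> assms have "0 < k" by (cases k) auto
  with k have "x - t = t * (k - 1) + \<rho>" by (cases k) auto
  then show "x - t \<in> progression t \<rho> n" using k unfolding progression_def by auto
qed

lemma minus_closed_cong_below:
  assumes closed: "minus_closed t A" and "x \<in> A" "y \<le> x" "y mod t = x mod t"
  shows "y \<in> A"
  using assms(2-)
proof (induction x rule: less_induct)
  case (less x)
  show ?case
  proof (cases "y = x")
    case False
    then have "t dvd x - y" "y < x" using less.prems mod_eq_dvd_iff_nat[of y x t] by simp_all
    moreover have "0 < t" using less.prems \<open>y < x\<close> by (cases t) auto
    ultimately have "t \<le> x - y" by (simp add: dvd_imp_le)
    moreover have "(x - t) mod t = x mod t" using \<open>t \<le> x - y\<close> by (simp add: le_mod_geq)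
    ultimately have "x - t \<in> A" "y \<le> x - t" "y mod t = (x - t) mod t"
      using closed less.prems unfolding minus_closed_def by auto
    then show ?thesis using less.IH[of "x - t"] \<open>0 < t\<close> \<open>t \<le> x - y\<close> by simp
  qed (use less.prems in simp)
qed

lemma residue_class_eq_progression:
  assumes fin: "finite A" and closed: "minus_closed t A" and "\<rho> < t"
  shows "{x \<in> A. x mod t = \<rho>} = progression t \<rho> (card {x \<in> A. x mod t = \<rho>})"
proof -
  define K where "K = (\<lambda>k. t * k + \<rho>) -` A"
  have inj: "inj_on (\<lambda>k. t * k + \<rho>) B" for B using assms(3) inj_on_progression by simp
  have class_eq: "{x \<in> A. x mod t = \<rho>} = (\<lambda>k. t * k + \<rho>) ` K"
  proof (intro set_eqI iffI)
    fix x assume "x \<in> {x \<in> A. x mod t = \<rho>}"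
    then have "x = t * (x div t) + \<rho>" "x \<in> A" using mult_div_mod_eq[of t x] by simp_all
    then show "x \<in> (\<lambda>k. t * k + \<rho>) ` K" unfolding K_def by (metis image_eqI vimageI)
  qed (use assms(3) K_def in auto)
  have "finite K" unfolding K_def using fin inj by (rule finite_vimageI)
  moreover have "y \<in> K" if "x \<in> K" "y \<le> x" for x y
    using that minus_closed_cong_below[OF closed, of "t * x + \<rho>" "t * y + \<rho>"] unfolding K_def by simp
  ultimately have "K = {..<card K}" by (rule finite_down_closed_eq_lessThan)
  moreover have "card {x \<in> A. x mod t = \<rho>} = card K" unfolding class_eq by (simp add: card_image inj)
  ultimately show ?thesis unfolding class_eq progression_def by simp
qed

definition signed_progression :: "nat \<Rightarrow> nat \<Rightarrow> int \<Rightarrow> nat set" where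
  "signed_progression t \<rho> a =
     (if 0 \<le> a then progression t \<rho> (nat a) else progression t (t - \<rho>) (nat (- a)))"

definition signed_residue_count :: "nat \<Rightarrow> nat \<Rightarrow> nat set \<Rightarrow> int" where
  "signed_residue_count t \<rho> A =
     int (card {x \<in> A. x mod t = \<rho>}) - int (card {x \<in> A. x mod t = t - \<rho>})"

lemma mod_signed_progression:
  assumes "0 < \<rho>" "\<rho> < t" "x \<in> signed_progression t \<rho> a"
  shows "x mod t = (if 0 \<le> a then \<rho> else t - \<rho>)"
  using assms mod_progression unfolding signed_progression_def by (auto split: if_splits)

lemma finite_signed_progression: "finite (signed_progression t \<rho> a)"
  unfolding signed_progression_def progression_def by simp

lemma minus_closed_signed_progression:
  "0 < \<rho> \<Longrightarrow> \<rho> < t \<Longrightarrow> minus_closed t (signed_progression t \<rho> a)"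
  unfolding signed_progression_def by (simp add: minus_closed_progression)

lemma sum_signed_progression:
  assumes "\<rho> < t"
  shows "2 * int (\<Sum>(signed_progression t \<rho> a)) = int t * (a ^ 2 - a) + 2 * int \<rho> * a"
proof (cases "0 \<le> a")
  case True
  then show ?thesis
    using sum_progression[of t \<rho> "nat a"] assms unfolding signed_progression_def by simp
next
  case False
  then show ?thesis
    using sum_progression[of t "t - \<rho>" "nat (- a)"] assms unfolding signed_progression_def
    by (simp add: of_nat_diff power2_eq_square algebra_simps)
qed

lemma signed_residue_count_signed_progression:
  assumes "0 < \<rho>" "\<rho> < t" "2 * \<rho> \<noteq> t"
  shows "signed_residue_count t \<rho> (signed_progression t \<rho> a) = a"
proof -
  have "{x \<in> signed_progression t \<rho> a. x mod t = \<sigma>} =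
        (if \<sigma> = (if 0 \<le> a then \<rho> else t - \<rho>) then signed_progression t \<rho> a else {})" for \<sigma>
    using mod_signed_progression[OF assms(1,2)] by auto
  moreover have "card (signed_progression t \<rho> a) = nat \<bar>a\<bar>"
    using assms card_progression unfolding signed_progression_def by simp
  ultimately show ?thesis unfolding signed_residue_count_def using assms by auto
qed

lemma signed_residue_count_Un_right:
  assumes "\<And>x. x \<in> B \<Longrightarrow> x mod t \<noteq> \<rho> \<and> x mod t \<noteq> t - \<rho>"
  shows "signed_residue_count t \<rho> (A \<union> B) = signed_residue_count t \<rho> A"
proof -
  have "{x \<in> A \<union> B. x mod t = \<sigma>} = {x \<in> A. x mod t = \<sigma>}" if "\<sigma> = \<rho> \<or> \<sigma> = t - \<rho>" for \<sigma>
    using assms that by auto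
  then show ?thesis unfolding signed_residue_count_def by simp
qed

lemma signed_progression_signed_residue_count:
  assumes fin: "finite A" and closed: "minus_closed t A" and "0 < \<rho>" "\<rho> < t"
    and not_both: "\<not> (\<rho> \<in> A \<and> t - \<rho> \<in> A)"
  shows "{x \<in> A. x mod t = \<rho> \<or> x mod t = t - \<rho>} =
         signed_progression t \<rho> (signed_residue_count t \<rho> A)"
proof -
  define n where "n \<sigma> = card {x \<in> A. x mod t = \<sigma>}" for \<sigma>
  have residue_class: "{x \<in> A. x mod t = \<sigma>} = progression t \<sigma> (n \<sigma>)" if "\<sigma> < t" for \<sigma>
    unfolding n_def using residue_class_eq_progression[OF fin closed that] .
  have least: "\<sigma> \<in> A" if "\<sigma> < t" "0 < n \<sigma>" for \<sigma>
  proof -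
    have "\<sigma> \<in> progression t \<sigma> (n \<sigma>)" using that(2) unfolding progression_def by force
    then show ?thesis using residue_class[OF that(1)] by blast
  qed
  have classes: "{x \<in> A. x mod t = \<rho> \<or> x mod t = t - \<rho>} =
      progression t \<rho> (n \<rho>) \<union> progression t (t - \<rho>) (n (t - \<rho>))"
    using residue_class[of \<rho>] residue_class[of "t - \<rho>"] assms(3,4) by auto
  have "n \<rho> = 0 \<or> n (t - \<rho>) = 0" using least[of \<rho>] least[of "t - \<rho>"] not_both assms(3,4) by auto
  then show ?thesis
    unfolding classes signed_progression_def signed_residue_count_def n_def[symmetric]
    by (auto simp: progression_def)
qed

definition bar_core_parts :: "int \<Rightarrow> int \<Rightarrow> nat set" where
  "bar_core_parts a b = signed_progression 6 1 a \<union> signed_progression 6 2 b"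

lemma mod_bar_core_parts:
  assumes "x \<in> bar_core_parts a b"
  shows "x mod 6 = (if 0 \<le> a then 1 else 5) \<or> x mod 6 = (if 0 \<le> b then 2 else 4)"
  using assms mod_signed_progression[of 1 6 x a] mod_signed_progression[of 2 6 x b]
  unfolding bar_core_parts_def by auto

lemma bar_core_parts_admissible:
  "finite (bar_core_parts a b)" "0 \<notin> bar_core_parts a b"
  "minus_closed 6 (bar_core_parts a b)" "no_pair_sum 6 (bar_core_parts a b)"
proof -
  show "finite (bar_core_parts a b)"
    unfolding bar_core_parts_def by (simp add: finite_signed_progression)
  show "0 \<notin> bar_core_parts a b"
    using mod_bar_core_parts[of 0 a b] by (auto split: if_splits)
  show "minus_closed 6 (bar_core_parts a b)"
    using minus_closed_signed_progression[of 1 6 a] minus_closed_signed_progression[of 2 6 b]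
    unfolding bar_core_parts_def minus_closed_def by auto
  have "x + y \<noteq> 6" if "x \<in> bar_core_parts a b" "y \<in> bar_core_parts a b" for x y
  proof
    assume sum: "x + y = 6"
    have "x mod 6 \<noteq> 0" "y mod 6 \<noteq> 0"
      using mod_bar_core_parts[OF that(1)] mod_bar_core_parts[OF that(2)] by auto
    then have "x \<noteq> 6" "y \<noteq> 6" by auto
    with sum have "x mod 6 + y mod 6 = 6" by simp
    then show False
      using mod_bar_core_parts[OF that(1)] mod_bar_core_parts[OF that(2)] by (auto split: if_splits)
  qed
  then show "no_pair_sum 6 (bar_core_parts a b)" unfolding no_pair_sum_def by blast
qed

lemma sum_bar_core_parts: "int (\<Sum>(bar_core_parts a b)) = 3 * a ^ 2 - 2 * a + 3 * b ^ 2 - b"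
proof -
  have "x mod 6 \<in> {1, 5}" if "x \<in> signed_progression 6 1 a" for x
    using mod_signed_progression[OF _ _ that] by simp
  moreover have "x mod 6 \<in> {2, 4}" if "x \<in> signed_progression 6 2 b" for x
    using mod_signed_progression[OF _ _ that] by simp
  ultimately have "signed_progression 6 1 a \<inter> signed_progression 6 2 b = {}" by fastforce
  then have "\<Sum>(bar_core_parts a b) = \<Sum>(signed_progression 6 1 a) + \<Sum>(signed_progression 6 2 b)"
    unfolding bar_core_parts_def by (simp add: sum.union_disjoint finite_signed_progression)
  then show ?thesis
    using sum_signed_progression[of 1 6 a] sum_signed_progression[of 2 6 b] by simp
qed

definition bar_core_coords :: "nat set \<Rightarrow> int \<times> int" where
  "bar_core_coords A = (signed_residue_count 6 1 A, signed_residue_count 6 2 A)"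

lemma bar_core_coords_bar_core_parts: "bar_core_coords (bar_core_parts a b) = (a, b)"
proof -
  have "signed_residue_count 6 1 (bar_core_parts a b) =
        signed_residue_count 6 1 (signed_progression 6 1 a)"
    unfolding bar_core_parts_def
    by (rule signed_residue_count_Un_right) (use mod_signed_progression[of 2 6 _ b] in auto)
  also have "\<dots> = a" by (rule signed_residue_count_signed_progression) simp_all
  finally have count1: "signed_residue_count 6 1 (bar_core_parts a b) = a" .
  have "signed_residue_count 6 2 (bar_core_parts a b) =
        signed_residue_count 6 2 (signed_progression 6 2 b)"
    unfolding bar_core_parts_def Un_commute[of "signed_progression 6 1 a"]
    by (rule signed_residue_count_Un_right) (use mod_signed_progression[of 1 6 _ a] in auto)
  also have "\<dots> = b" by (rule signed_residue_count_signed_progression) simp_all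
  finally have count2: "signed_residue_count 6 2 (bar_core_parts a b) = b" .
  show ?thesis unfolding bar_core_coords_def count1 count2 ..
qed

lemma bar_core_parts_bar_core_coords:
  assumes fin: "finite A" and "0 \<notin> A" and closed: "minus_closed 6 A" and no_sum: "no_pair_sum 6 A"
  shows "case_prod bar_core_parts (bar_core_coords A) = A"
proof -
  have not0: "x mod 6 \<noteq> 0" if "x \<in> A" for x
    using minus_closed_cong_below[OF closed that, of 0] assms(2) by auto
  have not3: "x mod 6 \<noteq> 3" if "x \<in> A" for x
  proof
    assume "x mod 6 = 3"
    moreover have "x mod 6 \<le> x" by (rule mod_less_eq_dividend)
    ultimately have "3 \<in> A" using minus_closed_cong_below[OF closed that, of 3] by simp
    then show False using no_sum unfolding no_pair_sum_def by force
  qed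
  have "x mod 6 = 1 \<or> x mod 6 = 5 \<or> x mod 6 = 2 \<or> x mod 6 = 4" if "x \<in> A" for x
    using not0[OF that] not3[OF that] by presburger
  then have "A = {x \<in> A. x mod 6 = 1 \<or> x mod 6 = 6 - 1} \<union> {x \<in> A. x mod 6 = 2 \<or> x mod 6 = 6 - 2}"
    by auto
  also have "\<dots> = bar_core_parts (signed_residue_count 6 1 A) (signed_residue_count 6 2 A)"
  proof -
    have "\<not> (1 \<in> A \<and> 6 - 1 \<in> A)" "\<not> (2 \<in> A \<and> 6 - 2 \<in> A)"
      using no_sum unfolding no_pair_sum_def by fastforce+
    then have "{x \<in> A. x mod 6 = 1 \<or> x mod 6 = 6 - 1} =
          signed_progression 6 1 (signed_residue_count 6 1 A)"
        "{x \<in> A. x mod 6 = 2 \<or> x mod 6 = 6 - 2} =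
          signed_progression 6 2 (signed_residue_count 6 2 A)"
      using signed_progression_signed_residue_count[OF fin closed, of 1]
        signed_progression_signed_residue_count[OF fin closed, of 2] by simp_all
    then show ?thesis unfolding bar_core_parts_def by simp
  qed
  finally show ?thesis unfolding bar_core_coords_def by simp
qed

lemma bij_betw_bar_core_parts:
  "bij_betw (case_prod bar_core_parts) {(a, b). 3 * a ^ 2 - 2 * a + 3 * b ^ 2 - b = int N}
     (bar_core_part_sets N)"
proof (rule bij_betw_byWitness[where f' = bar_core_coords], goal_cases)
  case 1
  show ?case by (simp add: bar_core_coords_bar_core_parts)
next
  case 2
  show ?case by (simp add: bar_core_parts_bar_core_coords bar_core_part_sets_def)
next
  case 3
  show ?case
  proof (intro image_subsetI)
    fix p assume "p \<in> {(a, b). 3 * a ^ 2 - 2 * a + 3 * b ^ 2 - b = int N}"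
    then obtain a b where p: "p = (a, b)" "3 * a ^ 2 - 2 * a + 3 * b ^ 2 - b = int N" by blast
    then have "int (\<Sum>(bar_core_parts a b)) = int N" by (simp only: sum_bar_core_parts)
    then have "\<Sum>(bar_core_parts a b) = N" by (simp only: of_nat_eq_iff)
    then show "case_prod bar_core_parts p \<in> bar_core_part_sets N"
      using p(1) bar_core_parts_admissible unfolding bar_core_part_sets_def by simp
  qed
next
  case 4
  show ?case
  proof (intro image_subsetI)
    fix A assume "A \<in> bar_core_part_sets N"
    then have A: "case_prod bar_core_parts (bar_core_coords A) = A" "\<Sum>A = N"
      using bar_core_parts_bar_core_coords[of A] unfolding bar_core_part_sets_def by simp_all
    obtain a b where ab: "bar_core_coords A = (a, b)" by fastforce
    then have "int (\<Sum>A) = 3 * a ^ 2 - 2 * a + 3 * b ^ 2 - b"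
      using A(1) sum_bar_core_parts[of a b] by simp
    then show "bar_core_coords A \<in> {(a, b). 3 * a ^ 2 - 2 * a + 3 * b ^ 2 - b = int N}"
      using ab A(2) by simp
  qed
qed

lemma card_eq_twice_card_by_involution:
  assumes "finite X"
    and inv: "\<And>p. p \<in> X \<Longrightarrow> f p \<in> X \<and> f (f p) = p \<and> (P (f p) \<longleftrightarrow> \<not> P p)"
  shows "card X = 2 * card {p \<in> X. P p}"
proof -
  have "bij_betw f {p \<in> X. P p} {p \<in> X. \<not> P p}"
    by (rule bij_betw_byWitness[where f' = f]) (use inv in auto)
  then have "card {p \<in> X. \<not> P p} = card {p \<in> X. P p}" by (simp add: bij_betw_same_card)
  have "card X = card ({p \<in> X. P p} \<union> {p \<in> X. \<not> P p})"
    by (rule arg_cong[where f = card]) blast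
  also have "\<dots> = card {p \<in> X. P p} + card {p \<in> X. \<not> P p}"
    by (rule card_Un_disjoint) (use assms(1) in auto)
  finally show ?thesis using \<open>card {p \<in> X. \<not> P p} = card {p \<in> X. P p}\<close> by simp
qed

lemma abs_le_power2_int: "\<bar>x :: int\<bar> \<le> x ^ 2"
proof (cases "x = 0")
  case False
  then have "\<bar>x\<bar> * 1 \<le> \<bar>x\<bar> * \<bar>x\<bar>" by (intro mult_left_mono) simp_all
  then show ?thesis by (simp add: power2_eq_square abs_mult_self_eq)
qed simp

lemma finite_sum_two_squares: "finite {(x :: int, y). x ^ 2 + y ^ 2 = n}"
proof -
  have "(x, y) \<in> {-n..n} \<times> {-n..n}" if "x ^ 2 + y ^ 2 = n" for x y :: int
    using that abs_le_power2_int[of x] abs_le_power2_int[of y] zero_le_power2[of x] zero_le_power2[of y]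
    by (simp add: abs_le_iff)
  then have "{(x :: int, y). x ^ 2 + y ^ 2 = n} \<subseteq> {-n..n} \<times> {-n..n}" by blast
  then show ?thesis by (rule finite_subset) simp
qed

lemma power2_mod_12: "(x :: int) ^ 2 mod 12 = (x mod 6) ^ 2 mod 12"
proof -
  define q u where "q = x div 6" and "u = x mod 6"
  have x: "x = 6 * q + u" unfolding q_def u_def by simp
  have "x ^ 2 = u ^ 2 + 12 * (3 * q ^ 2 + q * u)"
    unfolding x by (simp add: power2_eq_square algebra_simps)
  then show ?thesis unfolding u_def by (metis mod_mult_self2)
qed

lemma residues_of_sum_two_squares:
  fixes x y :: int
  assumes "(x ^ 2 + y ^ 2) mod 12 = 5"
  shows "x mod 6 \<in> {2, 4} \<and> y mod 6 \<in> {1, 5} \<or> x mod 6 \<in> {1, 5} \<and> y mod 6 \<in> {2, 4}"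
proof -
  have "((x mod 6) ^ 2 mod 12 + (y mod 6) ^ 2 mod 12) mod 12 = 5"
    using assms by (simp add: mod_add_eq power2_mod_12[symmetric])
  moreover have "x mod 6 \<in> {0, 1, 2, 3, 4, 5}" "y mod 6 \<in> {0, 1, 2, 3, 4, 5}" by auto
  ultimately show ?thesis by auto
qed

lemma card_sum_two_squares_eq_8:
  fixes n :: int
  assumes n: "n mod 12 = 5"
  shows "card {(x, y). x ^ 2 + y ^ 2 = n} =
         8 * card {(x, y). x ^ 2 + y ^ 2 = n \<and> x mod 6 = 4 \<and> y mod 6 = 5}"
proof -
  define S where "S = {(x :: int, y :: int). x ^ 2 + y ^ 2 = n}"
  define S1 where "S1 = {p \<in> S. fst p mod 6 \<in> {2, 4}}"
  define S2 where "S2 = {p \<in> S1. fst p mod 6 = 4}"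
  have fin: "finite S" "finite S1" "finite S2"
    unfolding S2_def S1_def S_def using finite_sum_two_squares by simp_all
  have residues: "x mod 6 \<in> {2, 4} \<and> y mod 6 \<in> {1, 5} \<or> x mod 6 \<in> {1, 5} \<and> y mod 6 \<in> {2, 4}"
    if "x ^ 2 + y ^ 2 = n" for x y
    using residues_of_sum_two_squares[of x y] that n by simp
  have neg: "(- u) mod 6 = 2 \<longleftrightarrow> u mod 6 = 4" "(- u) mod 6 = 4 \<longleftrightarrow> u mod 6 = 2"
    "(- u) mod 6 = 5 \<longleftrightarrow> u mod 6 = 1" for u :: int
    by presburger+
  have "card S = 2 * card S1"
    unfolding S1_def
  proof (rule card_eq_twice_card_by_involution[OF fin(1)])
    fix p assume "p \<in> S"
    then obtain x y where p: "p = (x, y)" and sum: "x ^ 2 + y ^ 2 = n" unfolding S_def by auto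
    then show "prod.swap p \<in> S \<and> prod.swap (prod.swap p) = p \<and>
        (fst (prod.swap p) mod 6 \<in> {2, 4} \<longleftrightarrow> \<not> fst p mod 6 \<in> {2, 4})"
      using residues[OF sum] unfolding S_def by (auto simp: add.commute)
  qed
  also have "card S1 = 2 * card S2"
    unfolding S2_def
  proof (rule card_eq_twice_card_by_involution[OF fin(2)])
    fix p assume "p \<in> S1"
    then show "apfst uminus p \<in> S1 \<and> apfst uminus (apfst uminus p) = p \<and>
        (fst (apfst uminus p) mod 6 = 4 \<longleftrightarrow> \<not> fst p mod 6 = 4)"
      unfolding S1_def S_def using neg by (cases p) auto
  qed
  also have "card S2 = 2 * card {p \<in> S2. snd p mod 6 = 5}"
  proof (rule card_eq_twice_card_by_involution[OF fin(3)])
    fix p assume "p \<in> S2"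
    then show "apsnd uminus p \<in> S2 \<and> apsnd uminus (apsnd uminus p) = p \<and>
        (snd (apsnd uminus p) mod 6 = 5 \<longleftrightarrow> \<not> snd p mod 6 = 5)"
    proof -
      obtain x y where p: "p = (x, y)" and sum: "x ^ 2 + y ^ 2 = n" and "x mod 6 = 4"
        using \<open>p \<in> S2\<close> unfolding S2_def S1_def S_def by auto
      then show ?thesis using residues[OF sum] neg unfolding S2_def S1_def S_def by auto
    qed
  qed
  also have "{p \<in> S2. snd p mod 6 = 5} = {(x, y). x ^ 2 + y ^ 2 = n \<and> x mod 6 = 4 \<and> y mod 6 = 5}"
    unfolding S2_def S1_def S_def by auto
  finally show ?thesis unfolding S_def by simp
qed

lemma bij_betw_sum_two_squares_residues:
  "bij_betw (\<lambda>(a, b). (6 * a - 2, 6 * b - 1)) {(a, b). 3 * a ^ 2 - 2 * a + 3 * b ^ 2 - b = m}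
     {(x, y). x ^ 2 + y ^ 2 = 12 * m + 5 \<and> x mod 6 = 4 \<and> y mod 6 = (5 :: int)}"
proof -
  have key: "(6 * a - 2) ^ 2 + (6 * b - 1) ^ 2 = 12 * (3 * a ^ 2 - 2 * a + 3 * b ^ 2 - b) + 5"
    for a b :: int
    by (simp add: power2_eq_square algebra_simps)
  have shift: "6 * ((x + 2) div 6) - 2 = x" "6 * ((y + 1) div 6) - 1 = y"
    if "x mod 6 = 4" "y mod 6 = 5" for x y :: int
    using that by presburger+
  show ?thesis
  proof (rule bij_betw_byWitness[where f' = "\<lambda>(x, y). ((x + 2) div 6, (y + 1) div 6)"], goal_cases)
    case 1
    show ?case by auto
  next
    case 2
    show ?case using shift by auto
  next
    case 3
    have "(6 * a - 2) mod 6 = 4" "(6 * b - 1) mod 6 = 5" for a b :: int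
      by presburger+
    then show ?case using key by auto
  next
    case 4
    show ?case
    proof (intro image_subsetI)
      fix p assume "p \<in> {(x, y). x ^ 2 + y ^ 2 = 12 * m + 5 \<and> x mod 6 = 4 \<and> y mod 6 = (5 :: int)}"
      then obtain x y where p: "p = (x, y)" and xy: "x ^ 2 + y ^ 2 = 12 * m + 5" "x mod 6 = 4" "y mod 6 = 5"
        by blast
      define a b where "a = (x + 2) div 6" and "b = (y + 1) div 6"
      have "12 * (3 * a ^ 2 - 2 * a + 3 * b ^ 2 - b) + 5 = 12 * m + 5"
        using key[of a b] shift[OF xy(2,3)] xy(1) unfolding a_def b_def by simp
      then show "(\<lambda>(x, y). ((x + 2) div 6, (y + 1) div 6)) p
          \<in> {(a, b). 3 * a ^ 2 - 2 * a + 3 * b ^ 2 - b = m}"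
        unfolding p a_def b_def by simp
    qed
  qed
qed

theorem corollary8p18:
  fixes N :: nat
  shows "real (card (D6 N)) =
         real (card {(x::int, y::int). x ^ 2 + y ^ 2 = 12 * int N + 5}) / 8"
proof -
  have "card (D6 N) = card {(a, b). 3 * a ^ 2 - 2 * a + 3 * b ^ 2 - b = int N}"
    using card_D6_eq_card_bar_core_part_sets bij_betw_same_card[OF bij_betw_bar_core_parts] by simp
  also have "\<dots> = card {(x, y). x ^ 2 + y ^ 2 = 12 * int N + 5 \<and> x mod 6 = 4 \<and> y mod 6 = (5 :: int)}"
    by (rule bij_betw_same_card[OF bij_betw_sum_two_squares_residues])
  finally have "card {(x :: int, y :: int). x ^ 2 + y ^ 2 = 12 * int N + 5} = 8 * card (D6 N)"
    using card_sum_two_squares_eq_8[of "12 * int N + 5"] by simp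
  then show ?thesis by simp
qed

end
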